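(* Let $n\ge2$ be even. For odd $k\ge1$, define $f_k[x_ix_j]=(x_i-x_j)^k$ in $\mathbb Q[x_1,\ldots,x_n]$. Then $$f_{n-1}[x_1\ldots x_n]=(-1)^{\binom{n/2}{2}}\Big(\prod_{k=0}^{n/2-1}\binom{n-1}{k}\Big)\prod_{1\le i<j\le n}(x_i-x_j).$$ Moreover, $f_{2m-1}[x_1\ldots x_n]=0$ whenever $m\ge1$ and $2m<n$.
   Context: For a skew-symmetric assignment $g[x_ix_j]=-g[x_jx_i]$, the Pfaffian is $$g[x_1\ldots x_n]=\sum s(x_1\ldots x_n,y_1\ldots y_n)\,g[y_1y_2]\cdots g[y_{n-1}y_n],$$ where the sum is over all partitions of $\{x_1,\ldots,x_n\}$ into pairs $\{y_1,y_2\},\ldots,\{y_{n-1},y_n\}$. The sign $s(x_1\ldots x_n,y_1\ldots y_n)$ is the sign of the permutation taking $x_1\ldots x_n$ to $y_1\ldots y_n$, and each summand is independent of how the pairing is listed. *)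

theory Defs
  imports Complex_Main "HOL-Combinatorics.Permutations"
begin

text \<open>Pairings of {1..n} (n even) listed canonically: a permutation p of {1..n}
  encodes the listing y_1 ... y_n = p 1 ... p n of the pairs
  {p 1, p 2}, {p 3, p 4}, ...; we require p(2i-1) < p(2i) within each pair and the
  first elements increasing, p(2i-1) < p(2i+1). Each partition of {1..n} into pairs
  has exactly one such canonical listing.\<close>

definition pf_perms :: "nat \<Rightarrow> (nat \<Rightarrow> nat) set" where
  "pf_perms n = {p. p permutes {1..n}
      \<and> (\<forall>i\<in>{1..n div 2}. p (2*i - 1) < p (2*i))
      \<and> (\<forall>i\<in>{1..<n div 2}. p (2*i - 1) < p (2*i + 1))}"

definition pfaffian :: "nat \<Rightarrow> (nat \<Rightarrow> nat \<Rightarrow> 'a::comm_ring_1) \<Rightarrow> 'a" where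
  "pfaffian n g = (\<Sum>p\<in>pf_perms n. of_int (sign p) * (\<Prod>i\<in>{1..n div 2}. g (p (2*i - 1)) (p (2*i))))"

end

theory Submission
  imports Defs "HOL-Library.FuncSet" "HOL-Computational_Algebra.Polynomial"
begin

text \<open>Write \<open>n = 2k\<close>. Summing the Pfaffian integrand over all permutations of \<open>{1..2k}\<close>
  instead of over pairings counts every pairing \<open>2\<^sup>k k!\<close> times, since for skew \<open>g\<close> the
  integrand is invariant under the hyperoctahedral stabiliser of a pairing. Expanding each
  factor \<open>(x\<^sub>a - x\<^sub>b)\<^sup>N\<close> binomially turns this sum into a signed combination of alternants
  \<open>det (x i ^ e j)\<close>, which vanish unless the \<open>2k\<close> exponents are distinct. For
  \<open>N < 2k - 1\<close> there are too few exponents; for \<open>N = 2k - 1\<close> the admissible choices form a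
  single orbit of the hyperoctahedral group, each contributing the same multiple of the
  Vandermonde determinant.\<close>

lemma sign_compose_permutes:
  assumes "p permutes {1..n::nat}" "q permutes {1..n}"
  shows "sign (p \<circ> q) = sign p * sign q"
  using permutes_imp_permutation[OF finite_atLeastAtMost assms(1)]
    permutes_imp_permutation[OF finite_atLeastAtMost assms(2)]
  by (rule sign_compose)

lemma permutes_atLeastAtMost_ge1:
  assumes "s permutes {1..k::nat}" "i \<ge> 1"
  shows "s i \<ge> 1"
  using assms permutes_in_image[OF assms(1), of i] permutes_not_in[OF assms(1), of i] by force

lemma prod_if_mem_minus_one:
  assumes "E \<subseteq> {1..k::nat}"
  shows "(\<Prod>i\<in>{1..k}. if i \<in> E then - 1 else 1 :: 'a :: comm_ring_1) = (- 1) ^ card E"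
proof -
  have "(\<Prod>i\<in>{1..k}. if i \<in> E then - 1 else 1 :: 'a) = (\<Prod>i\<in>E. - 1)"
    using assms by (intro prod.mono_neutral_cong_right) auto
  then show ?thesis by simp
qed

definition pair_of :: "nat \<Rightarrow> nat" where
  "pair_of t = (t + 1) div 2"

lemma pair_of_odd [simp]: "i \<ge> 1 \<Longrightarrow> pair_of (2 * i - Suc 0) = i"
  unfolding pair_of_def by auto

lemma pair_of_even [simp]: "pair_of (2 * i) = i"
  unfolding pair_of_def by auto

lemma pair_of_in_range: "pair_of t \<in> {1..k} \<longleftrightarrow> t \<in> {1..2 * k}"
  unfolding pair_of_def by auto

lemma pair_of_parity_inj: "pair_of a = pair_of b \<Longrightarrow> odd a = odd b \<Longrightarrow> a = b"
  unfolding pair_of_def by presburger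

lemma position_eq: "t \<ge> 1 \<Longrightarrow> t = 2 * pair_of t - 1 \<or> t = 2 * pair_of t"
  unfolding pair_of_def by presburger

lemma position_cases:
  fixes t :: nat
  obtains (zero) "t = 0" | (odd) i where "i \<ge> 1" "t = 2 * i - 1" | (even) i where "i \<ge> 1" "t = 2 * i"
proof (cases "odd t")
  case True
  then obtain j where "t = 2 * j + 1"
    by (rule oddE)
  then show thesis
    using odd[of "j + 1"] by simp
next
  case False
  then obtain i where "t = 2 * i"
    by (auto elim: evenE)
  then show thesis
    using zero even[of i] by (cases "i = 0") auto
qed

definition lift_pairs :: "(nat \<Rightarrow> nat) \<Rightarrow> nat \<Rightarrow> nat" where
  "lift_pairs s t = (if t = 0 then 0 else if odd t then 2 * s (pair_of t) - 1 else 2 * s (pair_of t))"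

definition flip_pairs :: "nat set \<Rightarrow> nat \<Rightarrow> nat" where
  "flip_pairs E t = (if t \<noteq> 0 \<and> pair_of t \<in> E then (if odd t then t + 1 else t - 1) else t)"

text \<open>The permutations \<open>hyperoct_perm s E\<close> with \<open>s\<close> permuting \<open>{1..k}\<close> and
  \<open>E \<subseteq> {1..k}\<close> form the stabiliser of the pairing \<open>{1,2}, {3,4}, \<dots>\<close>
  in the symmetric group on \<open>{1..2k}\<close>: \<open>E\<close> says which pairs are flipped, \<open>s\<close> how the
  pairs are then moved.\<close>

definition hyperoct_perm :: "(nat \<Rightarrow> nat) \<Rightarrow> nat set \<Rightarrow> nat \<Rightarrow> nat" where
  "hyperoct_perm s E = lift_pairs s \<circ> flip_pairs E"

definition hyperoct :: "nat \<Rightarrow> ((nat \<Rightarrow> nat) \<times> nat set) set" where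
  "hyperoct k = {s. s permutes {1..k}} \<times> Pow {1..k}"

lemma lift_pairs_odd [simp]: "i \<ge> 1 \<Longrightarrow> lift_pairs s (2 * i - Suc 0) = 2 * s i - 1"
  unfolding lift_pairs_def by auto

lemma lift_pairs_even [simp]: "i \<ge> 1 \<Longrightarrow> lift_pairs s (2 * i) = 2 * s i"
  unfolding lift_pairs_def by auto

lemma flip_pairs_odd [simp]:
  "i \<ge> 1 \<Longrightarrow> flip_pairs E (2 * i - Suc 0) = (if i \<in> E then 2 * i else 2 * i - 1)"
  unfolding flip_pairs_def by auto

lemma flip_pairs_even [simp]:
  "i \<ge> 1 \<Longrightarrow> flip_pairs E (2 * i) = (if i \<in> E then 2 * i - 1 else 2 * i)"
  unfolding flip_pairs_def by auto

lemma hyperoct_perm_odd [simp]: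
  "i \<ge> 1 \<Longrightarrow> hyperoct_perm s E (2 * i - Suc 0) = (if i \<in> E then 2 * s i else 2 * s i - 1)"
  unfolding hyperoct_perm_def by simp

lemma hyperoct_perm_even [simp]:
  "i \<ge> 1 \<Longrightarrow> hyperoct_perm s E (2 * i) = (if i \<in> E then 2 * s i - 1 else 2 * s i)"
  unfolding hyperoct_perm_def by simp

lemma flip_pairs_flip_pairs [simp]: "flip_pairs E (flip_pairs E t) = t"
proof (cases "t \<ge> 1")
  case True
  then show ?thesis
    by (cases t rule: position_cases) auto
qed (auto simp: flip_pairs_def)

lemma flip_pairs_permutes:
  assumes "E \<subseteq> {1..k}"
  shows "flip_pairs E permutes {1..2 * k}"
proof (rule inj_imp_permutes)
  show "inj_on (flip_pairs E) {1..2 * k}"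
    by (metis inj_onI flip_pairs_flip_pairs)
  show "flip_pairs E t \<in> {1..2 * k}" if "t \<in> {1..2 * k}" for t
    using that by (cases t rule: position_cases) auto
  show "flip_pairs E t = t" if "t \<notin> {1..2 * k}" for t
    using that assms pair_of_in_range[of t k] unfolding flip_pairs_def by auto
qed simp

lemma lift_pairs_permutes:
  assumes s: "s permutes {1..k}"
  shows "lift_pairs s permutes {1..2 * k}"
proof (rule inj_imp_permutes)
  have s_ge1: "s i \<ge> 1" if "i \<ge> 1" for i
    using permutes_atLeastAtMost_ge1[OF s that] .
  have s_eq: "s i = s j \<longleftrightarrow> i = j" for i j
    using permutes_inj[OF s] by (auto dest: injD)
  show "inj_on (lift_pairs s) {1..2 * k}"
  proof (rule inj_onI)
    fix a b
    assume a: "a \<in> {1..2 * k}" and b: "b \<in> {1..2 * k}" and eq: "lift_pairs s a = lift_pairs s b"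
    have "s (pair_of a) \<ge> 1" "s (pair_of b) \<ge> 1"
      using a b s_ge1 pair_of_in_range by auto
    then have "odd a = odd b \<and> s (pair_of a) = s (pair_of b)"
      using eq a b unfolding lift_pairs_def by (auto split: if_splits) presburger+
    then show "a = b"
      using pair_of_parity_inj s_eq by blast
  qed
  show "lift_pairs s t \<in> {1..2 * k}" if "t \<in> {1..2 * k}" for t
  proof -
    have "s (pair_of t) \<in> {1..k}"
      using that permutes_in_image[OF s] pair_of_in_range by blast
    then show ?thesis
      using that by (cases t rule: position_cases) auto
  qed
  show "lift_pairs s t = t" if "t \<notin> {1..2 * k}" for t
  proof (cases "t = 0")
    case False
    then show ?thesis
      using that permutes_not_in[OF s]
      by (cases t rule: position_cases) (auto simp: lift_pairs_def)
  qed (simp add: lift_pairs_def)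
qed simp

lemma hyperoct_perm_permutes:
  "s permutes {1..k} \<Longrightarrow> E \<subseteq> {1..k} \<Longrightarrow> hyperoct_perm s E permutes {1..2 * k}"
  unfolding hyperoct_perm_def by (intro permutes_compose flip_pairs_permutes lift_pairs_permutes)

lemma flip_pairs_insert:
  assumes "i \<ge> 1" "i \<notin> E"
  shows "flip_pairs (insert i E) = transpose (2 * i - 1) (2 * i) \<circ> flip_pairs E"
proof
  fix t
  show "flip_pairs (insert i E) t = (transpose (2 * i - 1) (2 * i) \<circ> flip_pairs E) t"
  proof (cases t rule: position_cases)
    case zero
    then show ?thesis
      using assms by (simp add: flip_pairs_def transpose_def)
  next
    case (odd j)
    have "2 * j - 1 \<noteq> 2 * i" "j \<noteq> i \<Longrightarrow> 2 * j \<noteq> 2 * i - 1"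
      using assms(1) by presburger+
    with odd assms show ?thesis
      by (cases "j = i") (auto simp: transpose_def)
  next
    case (even j)
    have "2 * j \<noteq> 2 * i - 1" "j \<noteq> i \<Longrightarrow> 2 * j - 1 \<noteq> 2 * i"
      using assms(1) by presburger+
    with even assms show ?thesis
      by (cases "j = i") (auto simp: transpose_def)
  qed
qed

lemma sign_flip_pairs:
  assumes "E \<subseteq> {1..k}"
  shows "sign (flip_pairs E) = (- 1) ^ card E"
proof -
  have "finite E"
    using assms finite_subset by blast
  then show ?thesis
    using assms
  proof (induction E rule: finite_induct)
    case empty
    have "flip_pairs {} = id"
      by (auto simp: flip_pairs_def)
    then show ?case
      by simp
  next
    case (insert i E)
    have "i \<ge> 1"
      using insert by auto
    have "permutation (flip_pairs E)"
      using flip_pairs_permutes[of E k] insert by (auto intro: permutes_imp_permutation)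
    then have "sign (flip_pairs (insert i E)) = sign (transpose (2 * i - 1) (2 * i)) * sign (flip_pairs E)"
      unfolding flip_pairs_insert[OF \<open>i \<ge> 1\<close> insert(2)] by (intro sign_compose permutation_swap_id)
    then show ?case
      using insert \<open>i \<ge> 1\<close> by (simp add: sign_swap_id)
  qed
qed

lemma lift_pairs_id: "lift_pairs id = id"
proof
  fix t
  show "lift_pairs id t = id t"
    by (cases t rule: position_cases) (auto simp: lift_pairs_def)
qed

text \<open>Each transposition of pairs lifts to a product of two transpositions, so every
  \<open>lift_pairs s\<close> is even.\<close>

lemma lift_pairs_transpose:
  assumes "a \<ge> 1" "b \<ge> 1" "\<And>i. i \<ge> 1 \<Longrightarrow> p i \<ge> 1"
  shows "lift_pairs (transpose a b \<circ> p) =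
    transpose (2 * a - 1) (2 * b - 1) \<circ> transpose (2 * a) (2 * b) \<circ> lift_pairs p"
proof
  fix t
  show "lift_pairs (transpose a b \<circ> p) t =
    (transpose (2 * a - 1) (2 * b - 1) \<circ> transpose (2 * a) (2 * b) \<circ> lift_pairs p) t"
  proof (cases "t = 0")
    case False
    define j where "j = p (pair_of t)"
    have "j \<ge> 1"
      using assms(3) False unfolding j_def pair_of_def by auto
    have "transpose (2 * a - 1) (2 * b - 1) (transpose (2 * a) (2 * b) (2 * j - 1))
        = 2 * transpose a b j - 1"
      "transpose (2 * a - 1) (2 * b - 1) (transpose (2 * a) (2 * b) (2 * j))
        = 2 * transpose a b j"
      using \<open>j \<ge> 1\<close> assms(1,2) by (cases "j = a"; cases "j = b"; simp add: transpose_def; arith)+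
    then show ?thesis
      using False unfolding j_def lift_pairs_def by simp
  qed (use assms in \<open>simp add: lift_pairs_def transpose_def\<close>)
qed

lemma sign_lift_pairs:
  assumes "s permutes {1..k}"
  shows "sign (lift_pairs s) = 1"
  using assms finite_atLeastAtMost[of 1 k]
proof (induction s rule: permutes_induct)
  case id
  then show ?case
    using lift_pairs_id by (simp add: id_def)
next
  case (swap a b p)
  have "a \<ge> 1" "b \<ge> 1" "2 * a - 1 \<noteq> 2 * b - 1" "2 * a \<noteq> 2 * b"
    using swap by auto
  have "permutation (lift_pairs p)"
    using lift_pairs_permutes[OF \<open>p permutes {1..k}\<close>] by (auto intro: permutes_imp_permutation)
  moreover have lift: "lift_pairs (transpose a b \<circ> p) =
      transpose (2 * a - 1) (2 * b - 1) \<circ> transpose (2 * a) (2 * b) \<circ> lift_pairs p"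
    using lift_pairs_transpose \<open>a \<ge> 1\<close> \<open>b \<ge> 1\<close>
      permutes_atLeastAtMost_ge1[OF \<open>p permutes {1..k}\<close>] by blast
  ultimately show ?case
    using \<open>sign (lift_pairs p) = 1\<close> \<open>2 * a - 1 \<noteq> 2 * b - 1\<close> \<open>2 * a \<noteq> 2 * b\<close>
    unfolding lift sign_compose[OF permutation_compose[OF permutation_swap_id permutation_swap_id]
        \<open>permutation (lift_pairs p)\<close>] sign_compose[OF permutation_swap_id permutation_swap_id]
    by (simp add: sign_swap_id)
qed

lemma sign_hyperoct_perm:
  assumes "s permutes {1..k}" "E \<subseteq> {1..k}"
  shows "sign (hyperoct_perm s E) = (- 1) ^ card E"
  unfolding hyperoct_perm_def
  using sign_compose_permutes[OF lift_pairs_permutes flip_pairs_permutes, OF assms]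
    sign_lift_pairs[OF assms(1)] sign_flip_pairs[OF assms(2)] by simp

definition pair_term :: "nat \<Rightarrow> (nat \<Rightarrow> nat \<Rightarrow> 'a::comm_ring_1) \<Rightarrow> (nat \<Rightarrow> nat) \<Rightarrow> 'a" where
  "pair_term k g q = of_int (sign q) * (\<Prod>i\<in>{1..k}. g (q (2 * i - 1)) (q (2 * i)))"

definition perm_pair_sum :: "nat \<Rightarrow> (nat \<Rightarrow> nat \<Rightarrow> 'a::comm_ring_1) \<Rightarrow> 'a" where
  "perm_pair_sum k g = (\<Sum>q\<in>{q. q permutes {1..2 * k}}. pair_term k g q)"

lemma pfaffian_eq_sum_pair_term: "pfaffian (2 * k) g = (\<Sum>p\<in>pf_perms (2 * k). pair_term k g p)"
  unfolding pfaffian_def pair_term_def by simp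

lemma pair_term_compose_hyperoct_perm:
  assumes skew: "\<And>a b. g a b = - g b a"
    and p: "p permutes {1..2 * k}" and s: "s permutes {1..k}" and E: "E \<subseteq> {1..k}"
  shows "pair_term k g (p \<circ> hyperoct_perm s E) = pair_term k g p"
proof -
  have "(\<Prod>i\<in>{1..k}. g ((p \<circ> hyperoct_perm s E) (2 * i - 1)) ((p \<circ> hyperoct_perm s E) (2 * i)))
      = (\<Prod>i\<in>{1..k}. (if i \<in> E then - 1 else 1) * g (p (2 * s i - 1)) (p (2 * s i)))"
    by (intro prod.cong refl) (auto simp: skew[of "p (2 * s _)"])
  also have "\<dots> = (- 1) ^ card E * (\<Prod>i\<in>{1..k}. g (p (2 * s i - 1)) (p (2 * s i)))"
    by (simp only: prod.distrib prod_if_mem_minus_one[OF E])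
  also have "(\<Prod>i\<in>{1..k}. g (p (2 * s i - 1)) (p (2 * s i))) = (\<Prod>i\<in>{1..k}. g (p (2 * i - 1)) (p (2 * i)))"
    using prod.permute[OF s, of "\<lambda>i. g (p (2 * i - 1)) (p (2 * i))"] by (simp add: comp_def)
  finally show ?thesis
    unfolding pair_term_def sign_compose_permutes[OF p hyperoct_perm_permutes[OF s E]]
      sign_hyperoct_perm[OF s E]
    by (simp add: mult.assoc)
qed

definition rank_perm :: "nat \<Rightarrow> (nat \<Rightarrow> 'a::linorder) \<Rightarrow> nat \<Rightarrow> nat" where
  "rank_perm k f i = (if i \<in> {1..k} then Suc (card {j\<in>{1..k}. f j < f i}) else i)"

lemma rank_perm_less:
  assumes "i \<in> {1..k}" "i' \<in> {1..k}" "f i < f i'"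
  shows "rank_perm k f i < rank_perm k f i'"
proof -
  have "{j\<in>{1..k}. f j < f i} \<subset> {j\<in>{1..k}. f j < f i'}"
    using assms by auto
  then have "card {j\<in>{1..k}. f j < f i} < card {j\<in>{1..k}. f j < f i'}"
    by (intro psubset_card_mono) auto
  then show ?thesis
    using assms unfolding rank_perm_def by auto
qed

lemma rank_perm_in:
  assumes "i \<in> {1..k}"
  shows "rank_perm k f i \<in> {1..k}"
proof -
  have "card {j\<in>{1..k}. f j < f i} \<le> card ({1..k} - {i})"
    by (intro card_mono) auto
  then show ?thesis
    using assms unfolding rank_perm_def by auto
qed

lemma rank_perm_less_iff:
  assumes "inj_on f {1..k}" "i \<in> {1..k}" "i' \<in> {1..k}"
  shows "rank_perm k f i < rank_perm k f i' \<longleftrightarrow> f i < f i'"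
  using rank_perm_less[of i k i' f] rank_perm_less[of i' k i f] inj_onD[OF assms(1)] assms(2,3)
  by (metis less_asym' linorder_neqE)

lemma rank_perm_permutes:
  assumes "inj_on f {1..k}"
  shows "rank_perm k f permutes {1..k}"
proof (rule inj_imp_permutes)
  show "inj_on (rank_perm k f) {1..k}"
  proof (rule inj_onI)
    fix i i'
    assume i: "i \<in> {1..k}" "i' \<in> {1..k}" and "rank_perm k f i = rank_perm k f i'"
    then have "f i = f i'"
      using rank_perm_less_iff[OF assms] by (metis less_irrefl linorder_neqE)
    then show "i = i'"
      using inj_onD[OF assms] i by blast
  qed
  show "rank_perm k f i \<in> {1..k}" if "i \<in> {1..k}" for i
    using rank_perm_in that .
  show "rank_perm k f i = i" if "i \<notin> {1..k}" for i
    using that unfolding rank_perm_def by auto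
qed simp

lemma rank_perm_cong: "(\<And>i. i \<in> {1..k} \<Longrightarrow> f i = f' i) \<Longrightarrow> rank_perm k f = rank_perm k f'"
  unfolding rank_perm_def by (intro ext) (auto intro!: arg_cong[where f = card])

lemma rank_perm_strict_mono_comp:
  assumes h: "strict_mono_on {1..k} h" and s: "s permutes {1..k}"
  shows "rank_perm k (h \<circ> s) = s"
proof
  fix i
  show "rank_perm k (h \<circ> s) i = s i"
  proof (cases "i \<in> {1..k}")
    case True
    have s_in: "s j \<in> {1..k} \<longleftrightarrow> j \<in> {1..k}" for j
      using permutes_in_image[OF s] .
    have "{j\<in>{1..k}. h (s j) < h (s i)} = {j\<in>{1..k}. s j < s i}"
      using strict_mono_on_less[OF h] s_in True by blast
    moreover have "card {j\<in>{1..k}. s j < s i} = card (s ` {j\<in>{1..k}. s j < s i})"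
      using permutes_inj_on[OF s] by (intro card_image[symmetric]) (auto intro: inj_on_subset)
    moreover have "s ` {j\<in>{1..k}. s j < s i} = {y\<in>s ` {1..k}. y < s i}"
      by auto
    moreover have "{y\<in>{1..k}. y < s i} = {1..<s i}"
      using s_in[of i] True by auto
    ultimately show ?thesis
      using True s_in[of i] unfolding rank_perm_def permutes_image[OF s] by auto
  qed (use permutes_not_in[OF s] in \<open>auto simp: rank_perm_def\<close>)
qed

lemma strict_mono_on_atLeastAtMost_Suc:
  fixes f :: "nat \<Rightarrow> 'a::order"
  assumes "\<And>i. i \<in> {a..<b} \<Longrightarrow> f i < f (Suc i)"
  shows "strict_mono_on {a..b} f"
proof (rule strict_mono_onI)
  fix i j
  assume "i \<in> {a..b}" "j \<in> {a..b}" "i < j"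
  from \<open>i < j\<close> \<open>i \<in> {a..b}\<close> \<open>j \<in> {a..b}\<close> show "f i < f j"
    by (induct i j rule: less_Suc_induct) (auto intro: assms order.strict_trans)
qed

lemma pf_perms_strict_mono_on:
  assumes "p \<in> pf_perms (2 * k)"
  shows "strict_mono_on {1..k} (\<lambda>j. p (2 * j - 1))"
proof (rule strict_mono_on_atLeastAtMost_Suc)
  fix j
  assume "j \<in> {1..<k}"
  then show "p (2 * j - 1) < p (2 * Suc j - 1)"
    using assms unfolding pf_perms_def by simp
qed

definition pair_min :: "(nat \<Rightarrow> nat) \<Rightarrow> nat \<Rightarrow> nat" where
  "pair_min q i = min (q (2 * i - 1)) (q (2 * i))"

definition reversed_pairs :: "nat \<Rightarrow> (nat \<Rightarrow> nat) \<Rightarrow> nat set" where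
  "reversed_pairs k q = {i\<in>{1..k}. q (2 * i) < q (2 * i - 1)}"

lemma reversed_pairs_subset: "reversed_pairs k q \<subseteq> {1..k}"
  unfolding reversed_pairs_def by auto

text \<open>Splits \<open>q\<close> as \<open>p \<circ> hyperoct_perm s E\<close> with \<open>p\<close> canonical: \<open>E\<close> records the pairs
  listed in decreasing order, \<open>s\<close> ranks the pairs by their smaller element.\<close>

definition pairing_decomp :: "nat \<Rightarrow> (nat \<Rightarrow> nat) \<Rightarrow> (nat \<Rightarrow> nat) \<times> (nat \<Rightarrow> nat) \<times> nat set" where
  "pairing_decomp k q = (let s = rank_perm k (pair_min q); E = reversed_pairs k q
     in (q \<circ> inv (hyperoct_perm s E), s, E))"

lemma pair_min_inj_on:
  assumes q: "q permutes {1..2 * k}"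
  shows "inj_on (pair_min q) {1..k}"
proof (rule inj_onI)
  fix i i'
  assume "i \<in> {1..k}" "i' \<in> {1..k}" "pair_min q i = pair_min q i'"
  moreover obtain a where "a = 2 * i - 1 \<or> a = 2 * i" "pair_min q i = q a"
    unfolding pair_min_def by (metis min_def)
  moreover obtain b where "b = 2 * i' - 1 \<or> b = 2 * i'" "pair_min q i' = q b"
    unfolding pair_min_def by (metis min_def)
  moreover have "q a = q b \<Longrightarrow> a = b"
    using permutes_inj[OF q] by (auto dest: injD)
  ultimately show "i = i'"
    by (metis pair_of_even pair_of_odd atLeastAtMost_iff One_nat_def)
qed

lemma compose_inv_hyperoct_perm_at_pair:
  assumes q: "q permutes {1..2 * k}" and s: "s permutes {1..k}" and E: "E \<subseteq> {1..k}"
    and i: "i \<in> {1..k}" and reversed: "i \<in> E \<longleftrightarrow> q (2 * i) < q (2 * i - 1)"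
  defines "p \<equiv> q \<circ> inv (hyperoct_perm s E)"
  shows "p (2 * s i - 1) = pair_min q i" and "p (2 * s i - 1) < p (2 * s i)"
proof -
  have h: "hyperoct_perm s E permutes {1..2 * k}"
    by (rule hyperoct_perm_permutes[OF s E])
  have p_h: "p (hyperoct_perm s E t) = q t" for t
    unfolding p_def using permutes_inverses(2)[OF h] by simp
  have "q (2 * i - 1) \<noteq> q (2 * i)"
    using i inj_eq[OF permutes_inj[OF q]] by auto
  then have "p (2 * s i - 1) = pair_min q i \<and> p (2 * s i - 1) < p (2 * s i)"
    using p_h[of "2 * i - 1"] p_h[of "2 * i"] i reversed unfolding pair_min_def
    by (cases "i \<in> E") auto
  then show "p (2 * s i - 1) = pair_min q i" and "p (2 * s i - 1) < p (2 * s i)"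
    by auto
qed

lemma pairing_decomp_in:
  assumes q: "q permutes {1..2 * k}"
  shows "pairing_decomp k q \<in> pf_perms (2 * k) \<times> hyperoct k"
proof -
  define s where "s = rank_perm k (pair_min q)"
  define E where "E = reversed_pairs k q"
  define p where "p = q \<circ> inv (hyperoct_perm s E)"
  have s: "s permutes {1..k}"
    unfolding s_def by (rule rank_perm_permutes[OF pair_min_inj_on[OF q]])
  have E: "E \<subseteq> {1..k}"
    unfolding E_def by (rule reversed_pairs_subset)
  have p: "p permutes {1..2 * k}"
    unfolding p_def by (rule permutes_compose[OF permutes_inv[OF hyperoct_perm_permutes[OF s E]] q])
  have at_pair: "p (2 * s i - 1) = pair_min q i" "p (2 * s i - 1) < p (2 * s i)" if "i \<in> {1..k}" for i
    using compose_inv_hyperoct_perm_at_pair[OF q s E that] that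
    unfolding p_def E_def reversed_pairs_def by auto
  have s_inv: "inv s j \<in> {1..k}" "s (inv s j) = j" if "j \<in> {1..k}" for j
    using permutes_inverses(1)[OF s] permutes_in_image[OF permutes_inv[OF s]] that by auto
  have "p (2 * j - 1) < p (2 * j)" if "j \<in> {1..k}" for j
    using at_pair(2)[of "inv s j"] s_inv[OF that] by simp
  moreover have "p (2 * j - 1) < p (2 * j + 1)" if "j \<in> {1..<k}" for j
  proof -
    have j: "j \<in> {1..k}" "Suc j \<in> {1..k}"
      using that by auto
    have "pair_min q (inv s j) < pair_min q (inv s (Suc j))"
      using rank_perm_less_iff[OF pair_min_inj_on[OF q]] s_inv[OF j(1)] s_inv[OF j(2)]
      unfolding s_def by (metis lessI)
    then show ?thesis
      using at_pair(1)[of "inv s j"] at_pair(1)[of "inv s (Suc j)"] s_inv[OF j(1)] s_inv[OF j(2)] by simp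
  qed
  ultimately have "p \<in> pf_perms (2 * k)"
    unfolding pf_perms_def using p by auto
  then show ?thesis
    unfolding pairing_decomp_def hyperoct_def Let_def s_def [symmetric] E_def [symmetric] p_def [symmetric]
    using s E by simp
qed

lemma pairing_decomp_compose:
  assumes p: "p \<in> pf_perms (2 * k)" and s: "s permutes {1..k}" and E: "E \<subseteq> {1..k}"
  shows "pairing_decomp k (p \<circ> hyperoct_perm s E) = (p, s, E)"
proof -
  define q where "q = p \<circ> hyperoct_perm s E"
  have increasing: "p (2 * j - 1) < p (2 * j)" if "j \<in> {1..k}" for j
    using p that unfolding pf_perms_def by auto
  have s_in: "s i \<in> {1..k}" if "i \<in> {1..k}" for i
    using permutes_in_image[OF s] that by blast
  have "pair_min q i = p (2 * s i - 1)" if "i \<in> {1..k}" for i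
    using increasing[OF s_in[OF that]] that unfolding q_def pair_min_def by (cases "i \<in> E") auto
  then have "rank_perm k (pair_min q) = rank_perm k ((\<lambda>j. p (2 * j - 1)) \<circ> s)"
    by (intro rank_perm_cong) simp
  also have "\<dots> = s"
    by (rule rank_perm_strict_mono_comp[OF pf_perms_strict_mono_on[OF p] s])
  finally have rank: "rank_perm k (pair_min q) = s" .
  have "i \<in> E \<longleftrightarrow> q (2 * i) < q (2 * i - 1)" if "i \<in> {1..k}" for i
    using increasing[OF s_in[OF that]] that unfolding q_def by (cases "i \<in> E") auto
  then have reversed: "reversed_pairs k q = E"
    unfolding reversed_pairs_def using E by auto
  have "q \<circ> inv (hyperoct_perm s E) = p"
    unfolding q_def using permutes_inv_o(1)[OF hyperoct_perm_permutes[OF s E]] by (simp add: comp_assoc)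
  then show ?thesis
    unfolding pairing_decomp_def rank reversed q_def [symmetric] by simp
qed

lemma bij_betw_pairing_decomp:
  "bij_betw (\<lambda>(p, s, E). p \<circ> hyperoct_perm s E) (pf_perms (2 * k) \<times> hyperoct k)
     {q. q permutes {1..2 * k}}"
proof (rule bij_betw_byWitness[where f' = "pairing_decomp k"])
  show "\<forall>x\<in>pf_perms (2 * k) \<times> hyperoct k. pairing_decomp k ((\<lambda>(p, s, E). p \<circ> hyperoct_perm s E) x) = x"
    using pairing_decomp_compose by (auto simp: hyperoct_def)
  show "\<forall>q\<in>{q. q permutes {1..2 * k}}. (\<lambda>(p, s, E). p \<circ> hyperoct_perm s E) (pairing_decomp k q) = q"
  proof
    fix q
    assume "q \<in> {q. q permutes {1..2 * k}}"
    then have q: "q permutes {1..2 * k}"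
      by simp
    have h: "hyperoct_perm (rank_perm k (pair_min q)) (reversed_pairs k q) permutes {1..2 * k}"
      by (rule hyperoct_perm_permutes[OF rank_perm_permutes[OF pair_min_inj_on[OF q]] reversed_pairs_subset])
    then show "(\<lambda>(p, s, E). p \<circ> hyperoct_perm s E) (pairing_decomp k q) = q"
      unfolding pairing_decomp_def Let_def using permutes_inv_o(2)[OF h] by (simp add: comp_assoc)
  qed
  show "(\<lambda>(p, s, E). p \<circ> hyperoct_perm s E) ` (pf_perms (2 * k) \<times> hyperoct k) \<subseteq> {q. q permutes {1..2 * k}}"
  proof (rule image_subsetI)
    fix x
    assume "x \<in> pf_perms (2 * k) \<times> hyperoct k"
    then obtain p s E where "x = (p, s, E)" "p permutes {1..2 * k}" "s permutes {1..k}" "E \<subseteq> {1..k}"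
      unfolding pf_perms_def hyperoct_def by blast
    then show "(\<lambda>(p, s, E). p \<circ> hyperoct_perm s E) x \<in> {q. q permutes {1..2 * k}}"
      using permutes_compose[OF hyperoct_perm_permutes] by simp
  qed
  show "pairing_decomp k ` {q. q permutes {1..2 * k}} \<subseteq> pf_perms (2 * k) \<times> hyperoct k"
    using pairing_decomp_in by blast
qed

lemma perm_pair_sum_eq_pfaffian:
  assumes skew: "\<And>a b. g a b = - g b a"
  shows "perm_pair_sum k g = of_nat (card (hyperoct k)) * pfaffian (2 * k) g"
proof -
  have "perm_pair_sum k g
      = (\<Sum>x\<in>pf_perms (2 * k) \<times> hyperoct k. pair_term k g ((\<lambda>(p, s, E). p \<circ> hyperoct_perm s E) x))"
    unfolding perm_pair_sum_def by (rule sum.reindex_bij_betw[OF bij_betw_pairing_decomp, symmetric])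
  also have "\<dots> = (\<Sum>(p, h)\<in>pf_perms (2 * k) \<times> hyperoct k. pair_term k g p)"
    using pair_term_compose_hyperoct_perm[OF skew]
    by (intro sum.cong) (auto simp: pf_perms_def hyperoct_def)
  also have "\<dots> = of_nat (card (hyperoct k)) * pfaffian (2 * k) g"
    unfolding pfaffian_eq_sum_pair_term sum.cartesian_product[symmetric]
    by (simp add: sum_distrib_left mult.commute)
  finally show ?thesis .
qed

definition alternant :: "nat \<Rightarrow> (nat \<Rightarrow> 'a::comm_ring_1) \<Rightarrow> (nat \<Rightarrow> nat) \<Rightarrow> 'a" where
  "alternant n x e = (\<Sum>q\<in>{q. q permutes {1..n}}. of_int (sign q) * (\<Prod>t\<in>{1..n}. x (q t) ^ e t))"

lemma alternant_eq_0_if_not_inj: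
  fixes x :: "nat \<Rightarrow> 'a::{idom, ring_char_0}"
  assumes "\<not> inj_on e {1..n}"
  shows "alternant n x e = 0"
proof -
  obtain a b where ab: "a \<in> {1..n}" "b \<in> {1..n}" "a \<noteq> b" "e a = e b"
    using assms unfolding inj_on_def by blast
  let ?T = "transpose a b"
  have T: "?T permutes {1..n}"
    using ab by (intro permutes_swap_id) auto
  have "alternant n x e = (\<Sum>q\<in>{q. q permutes {1..n}}. of_int (sign (q \<circ> ?T)) * (\<Prod>t\<in>{1..n}. x ((q \<circ> ?T) t) ^ e t))"
    unfolding alternant_def by (rule sum_permutations_compose_right[OF T])
  also have "\<dots> = (\<Sum>q\<in>{q. q permutes {1..n}}. - (of_int (sign q) * (\<Prod>t\<in>{1..n}. x (q t) ^ e t)))"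
  proof (rule sum.cong[OF refl])
    fix q
    assume "q \<in> {q. q permutes {1..n}}"
    then have "sign (q \<circ> ?T) = - sign q"
      using sign_compose_permutes[OF _ T, of q] ab by (simp add: sign_swap_id)
    moreover have "(\<Prod>t\<in>{1..n}. x (q (?T t)) ^ e (?T t)) = (\<Prod>t\<in>{1..n}. x (q t) ^ e t)"
      using prod.permute[OF T, of "\<lambda>t. x (q t) ^ e t"] by (simp add: comp_def)
    moreover have "e (?T t) = e t" for t
      using ab by (auto simp: transpose_def)
    ultimately show "of_int (sign (q \<circ> ?T)) * (\<Prod>t\<in>{1..n}. x ((q \<circ> ?T) t) ^ e t)
        = - (of_int (sign q) * (\<Prod>t\<in>{1..n}. x (q t) ^ e t))"
      by simp
  qed
  also have "\<dots> = - alternant n x e"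
    unfolding alternant_def by (simp add: sum_negf)
  finally show ?thesis
    by simp
qed

lemma alternant_permute_exponents:
  assumes r: "r permutes {1..n}" and e: "\<And>t. t \<in> {1..n} \<Longrightarrow> e t = r t - 1"
  shows "alternant n x e = of_int (sign r) * alternant n x (\<lambda>t. t - 1)"
proof -
  have "alternant n x e = (\<Sum>q\<in>{q. q permutes {1..n}}. of_int (sign (q \<circ> r)) * (\<Prod>t\<in>{1..n}. x ((q \<circ> r) t) ^ e t))"
    unfolding alternant_def by (rule sum_permutations_compose_right[OF r])
  also have "\<dots> = (\<Sum>q\<in>{q. q permutes {1..n}}. of_int (sign r) * (of_int (sign q) * (\<Prod>t\<in>{1..n}. x (q t) ^ (t - 1))))"
  proof (rule sum.cong[OF refl])
    fix q
    assume "q \<in> {q. q permutes {1..n}}"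
    then have "sign (q \<circ> r) = sign q * sign r"
      using sign_compose_permutes[OF _ r, of q] by simp
    moreover have "(\<Prod>t\<in>{1..n}. x (q (r t)) ^ e t) = (\<Prod>t\<in>{1..n}. x (q t) ^ (t - 1))"
      using prod.permute[OF r, of "\<lambda>t. x (q t) ^ (t - 1)"] e by (simp add: comp_def)
    ultimately show "of_int (sign (q \<circ> r)) * (\<Prod>t\<in>{1..n}. x ((q \<circ> r) t) ^ e t)
        = of_int (sign r) * (of_int (sign q) * (\<Prod>t\<in>{1..n}. x (q t) ^ (t - 1)))"
      by simp
  qed
  also have "\<dots> = of_int (sign r) * alternant n x (\<lambda>t. t - 1)"
    unfolding alternant_def by (simp add: sum_distrib_left)
  finally show ?thesis .
qed

lemma permutes_Suc_fixing_last:
  "{q. q permutes {1..Suc n} \<and> q (Suc n) = Suc n} = {q. q permutes {1..n}}"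
proof (intro set_eqI iffI)
  fix q
  assume "q \<in> {q. q permutes {1..Suc n} \<and> q (Suc n) = Suc n}"
  then have "q permutes insert (Suc n) {1..n}" "q (Suc n) = Suc n"
    by (auto simp: atLeastAtMostSuc_conv)
  then show "q \<in> {q. q permutes {1..n}}"
    using permutes_insert_lemma[of q "Suc n" "{1..n}"] by simp
next
  fix q
  assume "q \<in> {q. q permutes {1..n}}"
  then show "q \<in> {q. q permutes {1..Suc n} \<and> q (Suc n) = Suc n}"
    using permutes_subset[of q "{1..n}" "{1..Suc n}"] permutes_not_in[of q "{1..n}" "Suc n"] by auto
qed

lemma sum_permutes_Suc_if_moving_last_vanish:
  assumes "\<And>q. q permutes {1..Suc n} \<Longrightarrow> q (Suc n) \<noteq> Suc n \<Longrightarrow> f q = 0"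
  shows "(\<Sum>q\<in>{q. q permutes {1..Suc n}}. f q) = (\<Sum>q\<in>{q. q permutes {1..n}}. f q)"
  using assms permutes_Suc_fixing_last[of n]
  by (intro sum.mono_neutral_right) (auto intro: finite_permutations)

lemma alternant_last_exponent_root:
  fixes x :: "nat \<Rightarrow> 'a::comm_ring_1"
  assumes root: "\<And>a. a \<in> {1..n} \<Longrightarrow> f (x a) = 0"
  shows "(\<Sum>q\<in>{q. q permutes {1..Suc n}}. of_int (sign q) * (\<Prod>t\<in>{1..n}. x (q t) ^ (t - 1)) * f (x (q (Suc n))))
    = f (x (Suc n)) * alternant n x (\<lambda>t. t - 1)"
proof -
  have "f (x (q (Suc n))) = 0" if "q permutes {1..Suc n}" "q (Suc n) \<noteq> Suc n" for q
    using permutes_in_image[OF that(1), of "Suc n"] that(2) root by (auto simp: le_Suc_eq)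
  then have "(\<Sum>q\<in>{q. q permutes {1..Suc n}}. of_int (sign q) * (\<Prod>t\<in>{1..n}. x (q t) ^ (t - 1)) * f (x (q (Suc n))))
      = (\<Sum>q\<in>{q. q permutes {1..n}}. of_int (sign q) * (\<Prod>t\<in>{1..n}. x (q t) ^ (t - 1)) * f (x (q (Suc n))))"
    by (intro sum_permutes_Suc_if_moving_last_vanish) simp
  also have "\<dots> = (\<Sum>q\<in>{q. q permutes {1..n}}. of_int (sign q) * (\<Prod>t\<in>{1..n}. x (q t) ^ (t - 1)) * f (x (Suc n)))"
    using permutes_not_in[of _ "{1..n}" "Suc n"] by (intro sum.cong refl) (simp, metis)
  finally show ?thesis
    unfolding alternant_def by (simp add: sum_distrib_left mult_ac)
qed

text \<open>Expanding along the largest exponent: the exponent \<open>n\<close> of \<open>x (Suc n)\<close> can be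
  replaced by any monic polynomial of degree \<open>n\<close>, since lower exponents repeat one already
  present; choosing \<open>\<Prod>a\<in>{1..n}. X - x a\<close> kills every term that moves \<open>Suc n\<close>.\<close>

lemma alternant_Suc_Vandermonde_step:
  fixes x :: "nat \<Rightarrow> 'a::{idom, ring_char_0}"
  shows "alternant (Suc n) x (\<lambda>t. t - 1) = (\<Prod>a\<in>{1..n}. x (Suc n) - x a) * alternant n x (\<lambda>t. t - 1)"
proof -
  define p where "p = (\<Prod>a\<in>{1..n}. [:- x a, 1:])"
  define e where "e = (\<lambda>j t. if t = Suc n then j else t - (1::nat))"
  have poly_p: "poly p z = (\<Prod>a\<in>{1..n}. z - x a)" for z
    unfolding p_def by (simp add: poly_prod)
  have deg_p: "degree p = n"
    unfolding p_def by (subst degree_prod_eq_sum_degree) auto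
  have "coeff p n = 1"
    using deg_p lead_coeff_prod[of "\<lambda>a. [:- x a, 1:]" "{1..n}"] unfolding p_def by simp
  moreover have "alternant (Suc n) x (e j) = 0" if "j < n" for j
  proof (rule alternant_eq_0_if_not_inj)
    have "e j (Suc j) = e j (Suc n)"
      using that by (simp add: e_def)
    then show "\<not> inj_on (e j) {1..Suc n}"
      using that by (auto dest: inj_onD)
  qed
  moreover have "e n = (\<lambda>t. t - 1)"
    unfolding e_def by auto
  ultimately have "alternant (Suc n) x (\<lambda>t. t - 1) = (\<Sum>j\<le>n. coeff p j * alternant (Suc n) x (e j))"
    by (subst sum.mono_neutral_right[of "{..n}" "{n}"]) auto
  also have "\<dots> = (\<Sum>q\<in>{q. q permutes {1..Suc n}}.
      of_int (sign q) * (\<Prod>t\<in>{1..n}. x (q t) ^ (t - 1)) * poly p (x (q (Suc n))))"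
    unfolding alternant_def e_def poly_altdef deg_p
    by (simp add: sum_distrib_left sum_distrib_right prod.cl_ivl_Suc mult_ac sum.swap[of _ "{..n}"])
  also have "\<dots> = poly p (x (Suc n)) * alternant n x (\<lambda>t. t - 1)"
    by (rule alternant_last_exponent_root) (auto simp: poly_p)
  finally show ?thesis
    unfolding poly_p .
qed

lemma prod_pairs_Suc:
  "(\<Prod>i\<in>{1..Suc n}. \<Prod>j\<in>{i<..Suc n}. f i j)
    = (\<Prod>i\<in>{1..n}. \<Prod>j\<in>{i<..n}. f i j) * (\<Prod>i\<in>{1..n}. f i (Suc n) :: 'a::comm_monoid_mult)"
proof -
  have "{i<..Suc n} = insert (Suc n) {i<..n}" if "i \<in> {1..n}" for i
    using that by auto
  then have "(\<Prod>i\<in>{1..n}. \<Prod>j\<in>{i<..Suc n}. f i j) = (\<Prod>i\<in>{1..n}. (\<Prod>j\<in>{i<..n}. f i j) * f i (Suc n))"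
    by (intro prod.cong) (simp_all add: mult.commute)
  then show ?thesis
    by (simp add: prod.cl_ivl_Suc prod.distrib)
qed

lemma alternant_Vandermonde:
  fixes x :: "nat \<Rightarrow> 'a::{idom, ring_char_0}"
  shows "alternant n x (\<lambda>t. t - 1) = (- 1) ^ (n choose 2) * (\<Prod>i\<in>{1..n}. \<Prod>j\<in>{i<..n}. x i - x j)"
proof (induction n)
  case 0
  have "{q. q permutes ({} :: nat set)} = {id}"
    by auto
  then show ?case
    unfolding alternant_def by (simp add: numeral_2_eq_2)
next
  case (Suc n)
  have "(\<Prod>a\<in>{1..n}. x (Suc n) - x a) = (- 1) ^ n * (\<Prod>a\<in>{1..n}. x a - x (Suc n))"
    using prod_uminus[of "\<lambda>a. x a - x (Suc n)" "{1..n}"] by simp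
  moreover have "Suc n choose 2 = (n choose 2) + n"
    by (simp add: numeral_2_eq_2)
  ultimately show ?case
    unfolding alternant_Suc_Vandermonde_step Suc.IH prod_pairs_Suc by (simp add: power_add mult_ac)
qed

definition pair_exponents :: "nat \<Rightarrow> (nat \<Rightarrow> nat) \<Rightarrow> nat \<Rightarrow> nat" where
  "pair_exponents N c t = (if odd t then c (pair_of t) else N - c (pair_of t))"

definition binomial_weight :: "nat \<Rightarrow> nat \<Rightarrow> 'a::comm_ring_1" where
  "binomial_weight N c = of_nat (N choose c) * (- 1) ^ (N - c)"

lemma pair_exponents_odd [simp]: "i \<ge> 1 \<Longrightarrow> pair_exponents N c (2 * i - Suc 0) = c i"
  unfolding pair_exponents_def by auto

lemma pair_exponents_even [simp]: "pair_exponents N c (2 * i) = N - c i"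
  unfolding pair_exponents_def by auto

lemma prod_consecutive_pairs:
  fixes f :: "nat \<Rightarrow> 'a::comm_monoid_mult"
  shows "(\<Prod>i\<in>{1..k}. f (2 * i - 1) * f (2 * i)) = (\<Prod>t\<in>{1..2 * k}. f t)"
proof (induction k)
  case (Suc k)
  have "{1..2 * Suc k} = insert (Suc (Suc (2 * k))) (insert (Suc (2 * k)) {1..2 * k})"
    by auto
  with Suc show ?case
    by (simp add: prod.cl_ivl_Suc mult_ac)
qed simp

lemma power_diff_binomial: "(a - b) ^ N = (\<Sum>c\<le>N. binomial_weight N c * (a ^ c * b ^ (N - c)))"
proof -
  have "(a - b) ^ N = (\<Sum>c\<le>N. of_nat (N choose c) * a ^ c * (- b) ^ (N - c))"
    using binomial_ring[of a "- b" N] by simp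
  then show ?thesis
    unfolding binomial_weight_def by (simp add: power_minus[of b] mult_ac)
qed

lemma perm_pair_sum_power_diff:
  fixes x :: "nat \<Rightarrow> 'a::comm_ring_1"
  shows "perm_pair_sum k (\<lambda>a b. (x a - x b) ^ N)
    = (\<Sum>c\<in>{1..k} \<rightarrow>\<^sub>E {..N}. (\<Prod>i\<in>{1..k}. binomial_weight N (c i)) * alternant (2 * k) x (pair_exponents N c))"
proof -
  let ?P = "{q. q permutes {1..2 * k}}"
  let ?C = "{1..k} \<rightarrow>\<^sub>E {..N}"
  have factor: "(\<Prod>i\<in>{1..k}. binomial_weight N (c i) * (x (q (2 * i - 1)) ^ c i * x (q (2 * i)) ^ (N - c i)))
      = (\<Prod>i\<in>{1..k}. binomial_weight N (c i)) * (\<Prod>t\<in>{1..2 * k}. x (q t) ^ pair_exponents N c t)" for q c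
    unfolding prod_consecutive_pairs[symmetric] prod.distrib by simp
  have "perm_pair_sum k (\<lambda>a b. (x a - x b) ^ N)
      = (\<Sum>q\<in>?P. of_int (sign q) * (\<Sum>c\<in>?C. \<Prod>i\<in>{1..k}.
           binomial_weight N (c i) * (x (q (2 * i - 1)) ^ c i * x (q (2 * i)) ^ (N - c i))))"
    unfolding perm_pair_sum_def pair_term_def power_diff_binomial by (simp add: prod_sum_PiE)
  also have "\<dots> = (\<Sum>c\<in>?C. \<Sum>q\<in>?P. (\<Prod>i\<in>{1..k}. binomial_weight N (c i))
      * (of_int (sign q) * (\<Prod>t\<in>{1..2 * k}. x (q t) ^ pair_exponents N c t)))"
    unfolding factor by (subst sum.swap) (simp add: sum_distrib_left mult_ac)
  finally show ?thesis
    unfolding alternant_def by (simp add: sum_distrib_left)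
qed

lemma binomial_weight_odd:
  assumes "odd N" "j \<le> N"
  shows "binomial_weight N j = - (of_nat (N choose j) * (- 1) ^ j :: 'a::comm_ring_1)"
    and "binomial_weight N (N - j) = (of_nat (N choose j) * (- 1) ^ j :: 'a)"
proof -
  have "even (N - j) \<longleftrightarrow> odd j"
    using assms by presburger
  then have "(- 1 :: 'a) ^ (N - j) = - ((- 1) ^ j)"
    by (simp add: minus_one_power_iff)
  then show "binomial_weight N j = - (of_nat (N choose j) * (- 1) ^ j :: 'a)"
    unfolding binomial_weight_def by simp
  show "binomial_weight N (N - j) = (of_nat (N choose j) * (- 1) ^ j :: 'a)"
    unfolding binomial_weight_def using assms(2) binomial_symmetric[OF assms(2)] by simp
qed

definition rotate_perm :: "nat \<Rightarrow> nat \<Rightarrow> nat" where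
  "rotate_perm m u = (if u \<in> {1..m} then u + 1 else if u = Suc m then 1 else u)"

lemma rotate_perm_Suc: "rotate_perm (Suc m) = transpose 1 (m + 2) \<circ> rotate_perm m"
  by (auto simp: rotate_perm_def transpose_def fun_eq_iff)

lemma rotate_perm_permutes_sign:
  "rotate_perm m permutes {1..Suc m} \<and> sign (rotate_perm m) = (- 1) ^ m"
proof (induction m)
  case 0
  have "rotate_perm 0 = id"
    by (rule ext) (simp add: rotate_perm_def)
  then show ?case
    by (simp only: permutes_id sign_id power_0)
next
  case (Suc m)
  have T: "transpose 1 (m + 2) permutes {1..Suc (Suc m)}"
    by (intro permutes_swap_id) auto
  have R: "rotate_perm m permutes {1..Suc (Suc m)}"
    using Suc.IH by (auto intro: permutes_subset)
  have "rotate_perm (Suc m) permutes {1..Suc (Suc m)}"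
    unfolding rotate_perm_Suc by (rule permutes_compose[OF R T])
  moreover have "sign (rotate_perm (Suc m)) = (- 1) ^ Suc m"
    unfolding rotate_perm_Suc sign_compose_permutes[OF T R] using Suc.IH by (simp add: sign_swap_id)
  ultimately show ?case ..
qed

text \<open>Under \<open>hyperoct_exps k id {}\<close> (defined below) the \<open>i\<close>-th pair gets the exponents \<open>k - i\<close> and
  \<open>k - 1 + i\<close>, so the shifted exponents form the nested pairs \<open>{k + 1 - i, k + i}\<close> around the
  centre of \<open>{1..2k}\<close>.\<close>

definition nest_perm :: "nat \<Rightarrow> nat \<Rightarrow> nat" where
  "nest_perm k t = (if t \<in> {1..2 * k} then (if odd t then k + 1 - pair_of t else k + pair_of t) else t)"

lemma nest_perm_in: "t \<in> {1..2 * k} \<Longrightarrow> nest_perm k t \<in> {1..2 * k}"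
  using pair_of_in_range[of t k] unfolding nest_perm_def by auto

lemma nest_perm_Suc: "nest_perm (Suc k) = rotate_perm (2 * k) \<circ> nest_perm k"
proof
  fix t
  show "nest_perm (Suc k) t = (rotate_perm (2 * k) \<circ> nest_perm k) t"
  proof (cases "t \<in> {1..2 * k}")
    case True
    then have "rotate_perm (2 * k) (nest_perm k t) = nest_perm k t + 1"
      using nest_perm_in unfolding rotate_perm_def by auto
    moreover have "nest_perm (Suc k) t = nest_perm k t + 1"
      using True pair_of_in_range[of t k] unfolding nest_perm_def by auto
    ultimately show ?thesis
      by simp
  next
    case False
    then have "nest_perm k t = t"
      unfolding nest_perm_def by auto
    moreover have "pair_of (Suc (2 * k)) = Suc k" "pair_of (Suc (Suc (2 * k))) = Suc k"
      unfolding pair_of_def by simp_all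
    ultimately show ?thesis
      using False unfolding nest_perm_def rotate_perm_def by (auto simp: le_Suc_eq)
  qed
qed

lemma nest_perm_permutes_sign: "nest_perm k permutes {1..2 * k} \<and> sign (nest_perm k) = 1"
proof (induction k)
  case 0
  have "nest_perm 0 = id"
    by (rule ext) (simp add: nest_perm_def)
  then show ?case
    by (simp only: permutes_id sign_id)
next
  case (Suc k)
  have R: "rotate_perm (2 * k) permutes {1..2 * Suc k}" "sign (rotate_perm (2 * k)) = 1"
    using rotate_perm_permutes_sign[of "2 * k"] by (auto intro: permutes_subset)
  have N: "nest_perm k permutes {1..2 * Suc k}"
    using Suc.IH by (auto intro: permutes_subset)
  have "nest_perm (Suc k) permutes {1..2 * Suc k}"
    unfolding nest_perm_Suc by (rule permutes_compose[OF N R(1)])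
  moreover have "sign (nest_perm (Suc k)) = 1"
    unfolding nest_perm_Suc sign_compose_permutes[OF R(1) N] using R(2) Suc.IH by simp
  ultimately show ?case ..
qed

definition hyperoct_exps :: "nat \<Rightarrow> (nat \<Rightarrow> nat) \<Rightarrow> nat set \<Rightarrow> nat \<Rightarrow> nat" where
  "hyperoct_exps k s E i = (if i \<in> {1..k} then (if i \<in> E then k - 1 + s i else k - s i) else undefined)"

definition hyperoct_of_exps :: "nat \<Rightarrow> (nat \<Rightarrow> nat) \<Rightarrow> (nat \<Rightarrow> nat) \<times> nat set" where
  "hyperoct_of_exps k c =
     ((\<lambda>i. if i \<in> {1..k} then k - min (c i) (2 * k - 1 - c i) else i), {i\<in>{1..k}. k \<le> c i})"

definition exponent_perm :: "nat \<Rightarrow> (nat \<Rightarrow> nat) \<Rightarrow> nat \<Rightarrow> nat" where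
  "exponent_perm k c t = (if t \<in> {1..2 * k} then pair_exponents (2 * k - 1) c t + 1 else t)"

definition distinct_exps :: "nat \<Rightarrow> (nat \<Rightarrow> nat) set" where
  "distinct_exps k = {c \<in> {1..k} \<rightarrow>\<^sub>E {..2 * k - 1}. inj_on (pair_exponents (2 * k - 1) c) {1..2 * k}}"

lemma inj_on_exponent_perm_iff:
  "inj_on (exponent_perm k c) {1..2 * k} \<longleftrightarrow> inj_on (pair_exponents (2 * k - 1) c) {1..2 * k}"
  unfolding inj_on_def exponent_perm_def by auto

lemma exponent_perm_hyperoct_exps:
  assumes s: "s permutes {1..k}" and E: "E \<subseteq> {1..k}"
  shows "exponent_perm k (hyperoct_exps k s E) = nest_perm k \<circ> hyperoct_perm s E"
proof
  fix t
  show "exponent_perm k (hyperoct_exps k s E) t = (nest_perm k \<circ> hyperoct_perm s E) t"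
  proof (cases "t \<in> {1..2 * k}")
    case True
    define i where "i = pair_of t"
    have i: "i \<in> {1..k}" "t = 2 * i - 1 \<or> t = 2 * i"
      using True pair_of_in_range[of t k] position_eq[of t] unfolding i_def by auto
    have "s i \<in> {1..k}"
      using permutes_in_image[OF s] i(1) by blast
    with i show ?thesis
      unfolding exponent_perm_def nest_perm_def hyperoct_exps_def by (cases "i \<in> E") auto
  next
    case False
    then show ?thesis
      using permutes_not_in[OF hyperoct_perm_permutes[OF s E]]
      unfolding exponent_perm_def nest_perm_def by auto
  qed
qed

lemma hyperoct_exps_in_distinct_exps:
  assumes s: "s permutes {1..k}" and E: "E \<subseteq> {1..k}"
  shows "hyperoct_exps k s E \<in> distinct_exps k"
proof -
  have "hyperoct_exps k s E i \<le> 2 * k - 1" if "i \<in> {1..k}" for i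
    using permutes_in_image[OF s, of i] that unfolding hyperoct_exps_def by auto
  then have "hyperoct_exps k s E \<in> {1..k} \<rightarrow>\<^sub>E {..2 * k - 1}"
    unfolding PiE_iff extensional_def by (simp add: hyperoct_exps_def)
  moreover have "inj_on (exponent_perm k (hyperoct_exps k s E)) {1..2 * k}"
    unfolding exponent_perm_hyperoct_exps[OF s E]
    using nest_perm_permutes_sign hyperoct_perm_permutes[OF s E]
    by (blast intro: comp_inj_on permutes_inj_on permutes_subset)
  then have "inj_on (pair_exponents (2 * k - 1) (hyperoct_exps k s E)) {1..2 * k}"
    unfolding inj_on_exponent_perm_iff .
  ultimately show ?thesis
    unfolding distinct_exps_def by simp
qed

lemma hyperoct_of_exps_hyperoct_exps:
  assumes s: "s permutes {1..k}" and E: "E \<subseteq> {1..k}"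
  shows "hyperoct_of_exps k (hyperoct_exps k s E) = (s, E)"
proof -
  have s_in: "s i \<in> {1..k}" if "i \<in> {1..k}" for i
    using permutes_in_image[OF s] that by blast
  have "(if i \<in> {1..k} then k - min (hyperoct_exps k s E i) (2 * k - 1 - hyperoct_exps k s E i) else i) = s i" for i
    using s_in[of i] permutes_not_in[OF s, of i] unfolding hyperoct_exps_def by (cases "i \<in> E") auto
  moreover have "{i\<in>{1..k}. k \<le> hyperoct_exps k s E i} = E"
    using E s_in unfolding hyperoct_exps_def by force
  ultimately show ?thesis
    unfolding hyperoct_of_exps_def by auto
qed

lemma hyperoct_exps_hyperoct_of_exps:
  assumes c: "c \<in> distinct_exps k"
  shows "hyperoct_exps k (fst (hyperoct_of_exps k c)) (snd (hyperoct_of_exps k c)) = c"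
proof
  fix i
  show "hyperoct_exps k (fst (hyperoct_of_exps k c)) (snd (hyperoct_of_exps k c)) i = c i"
  proof (cases "i \<in> {1..k}")
    case True
    then have "c i \<le> 2 * k - 1"
      using c unfolding distinct_exps_def by auto
    with True show ?thesis
      unfolding hyperoct_exps_def hyperoct_of_exps_def by auto
  next
    case False
    then show ?thesis
      using c unfolding hyperoct_exps_def distinct_exps_def by (auto simp: PiE_iff extensional_def)
  qed
qed

lemma hyperoct_of_exps_in:
  assumes c: "c \<in> distinct_exps k"
  shows "hyperoct_of_exps k c \<in> hyperoct k"
proof -
  define m where "m i = min (c i) (2 * k - 1 - c i)" for i
  define s where "s i = (if i \<in> {1..k} then k - m i else i)" for i
  have c_le: "c i \<le> 2 * k - 1" if "i \<in> {1..k}" for i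
    using c that unfolding distinct_exps_def by auto
  have m_less: "m i < k" if "i \<in> {1..k}" for i
    using c_le[OF that] that unfolding m_def by auto
  have m_attained: "\<exists>a \<in> {2 * i - 1, 2 * i}. m i = pair_exponents (2 * k - 1) c a" if "i \<in> {1..k}" for i
    using that unfolding m_def min_def by auto
  have "inj_on m {1..k}"
  proof (rule inj_onI)
    fix i j
    assume i: "i \<in> {1..k}" and j: "j \<in> {1..k}" and "m i = m j"
    obtain a where a: "a \<in> {2 * i - 1, 2 * i}" "m i = pair_exponents (2 * k - 1) c a"
      using m_attained[OF i] by blast
    obtain b where b: "b \<in> {2 * j - 1, 2 * j}" "m j = pair_exponents (2 * k - 1) c b"
      using m_attained[OF j] by blast
    have "a \<in> {1..2 * k}" "b \<in> {1..2 * k}"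
      using a(1) b(1) i j by auto
    then have "a = b"
      using c a(2) b(2) \<open>m i = m j\<close> unfolding distinct_exps_def by (auto dest: inj_onD)
    then show "i = j"
      using a(1) b(1) i j by auto
  qed
  then have "inj_on s {1..k}"
    using m_less unfolding s_def inj_on_def by (metis diff_diff_cancel less_imp_le)
  moreover have "s i \<in> {1..k}" if "i \<in> {1..k}" for i
    using m_less[OF that] that unfolding s_def by auto
  ultimately have "s permutes {1..k}"
    by (intro inj_imp_permutes) (auto simp: s_def)
  then show ?thesis
    unfolding hyperoct_of_exps_def hyperoct_def s_def m_def by auto
qed

lemma bij_betw_hyperoct_exps:
  "bij_betw (\<lambda>(s, E). hyperoct_exps k s E) (hyperoct k) (distinct_exps k)"
proof (rule bij_betw_byWitness[where f' = "hyperoct_of_exps k"])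
  show "\<forall>h\<in>hyperoct k. hyperoct_of_exps k ((\<lambda>(s, E). hyperoct_exps k s E) h) = h"
    using hyperoct_of_exps_hyperoct_exps by (auto simp: hyperoct_def)
  show "\<forall>c\<in>distinct_exps k. (\<lambda>(s, E). hyperoct_exps k s E) (hyperoct_of_exps k c) = c"
    using hyperoct_exps_hyperoct_of_exps by (auto simp: case_prod_beta)
  show "(\<lambda>(s, E). hyperoct_exps k s E) ` hyperoct k \<subseteq> distinct_exps k"
    using hyperoct_exps_in_distinct_exps by (auto simp: hyperoct_def)
  show "hyperoct_of_exps k ` distinct_exps k \<subseteq> hyperoct k"
    using hyperoct_of_exps_in by blast
qed

lemma weight_sign_hyperoct_exps:
  assumes s: "s permutes {1..k}" and E: "E \<subseteq> {1..k}"
  shows "(\<Prod>i\<in>{1..k}. binomial_weight (2 * k - 1) (hyperoct_exps k s E i))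
      * of_int (sign (exponent_perm k (hyperoct_exps k s E)))
    = (- 1) ^ k * (\<Prod>j\<in>{0..<k}. of_nat ((2 * k - 1) choose j) * (- 1) ^ j :: 'a::comm_ring_1)"
proof -
  define v where "v j = (of_nat ((2 * k - 1) choose j) * (- 1) ^ j :: 'a)" for j
  have weight: "binomial_weight (2 * k - 1) (hyperoct_exps k s E i) = - ((if i \<in> E then - 1 else 1) * v (k - s i))"
    if i: "i \<in> {1..k}" for i
  proof -
    have "s i \<in> {1..k}"
      using permutes_in_image[OF s] i by blast
    then have odd: "odd (2 * k - 1)" "k - s i \<le> 2 * k - 1" and "k - 1 + s i = 2 * k - 1 - (k - s i)"
      by auto
    then have "hyperoct_exps k s E i = (if i \<in> E then 2 * k - 1 - (k - s i) else k - s i)"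
      using i unfolding hyperoct_exps_def by simp
    then show ?thesis
      unfolding v_def using binomial_weight_odd[OF odd] by (cases "i \<in> E") (simp_all only: if_True if_False, simp_all)
  qed
  have "(\<Prod>i\<in>{1..k}. v (k - s i)) = (\<Prod>j\<in>{1..k}. v (k - j))"
    using prod.permute[OF s, of "\<lambda>j. v (k - j)"] by (simp add: comp_def)
  also have "\<dots> = (\<Prod>j\<in>{0..<k}. v j)"
    by (rule prod.reindex_bij_witness[where i = "\<lambda>j. k - j" and j = "\<lambda>j. k - j"]) auto
  finally have "(\<Prod>i\<in>{1..k}. v (k - s i)) = (\<Prod>j\<in>{0..<k}. v j)" .
  moreover have "(\<Prod>i\<in>{1..k}. binomial_weight (2 * k - 1) (hyperoct_exps k s E i))
      = (\<Prod>i\<in>{1..k}. - ((if i \<in> E then - 1 else 1) * v (k - s i)))"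
    by (rule prod.cong[OF refl weight])
  ultimately have "(\<Prod>i\<in>{1..k}. binomial_weight (2 * k - 1) (hyperoct_exps k s E i))
      = (- 1) ^ k * ((- 1) ^ card E * (\<Prod>j\<in>{0..<k}. v j))"
    unfolding prod_uminus prod.distrib prod_if_mem_minus_one[OF E] by simp
  moreover have "sign (exponent_perm k (hyperoct_exps k s E)) = (- 1) ^ card E"
    unfolding exponent_perm_hyperoct_exps[OF s E]
      sign_compose_permutes[OF conjunct1[OF nest_perm_permutes_sign] hyperoct_perm_permutes[OF s E]]
    using nest_perm_permutes_sign sign_hyperoct_perm[OF s E] by simp
  ultimately show ?thesis
    unfolding v_def by (simp add: mult_ac)
qed

lemma exponent_perm_permutes:
  assumes c: "c \<in> distinct_exps k"
  shows "exponent_perm k c permutes {1..2 * k}"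
proof (rule inj_imp_permutes)
  show "inj_on (exponent_perm k c) {1..2 * k}"
    using c unfolding inj_on_exponent_perm_iff distinct_exps_def by simp
  show "exponent_perm k c t \<in> {1..2 * k}" if "t \<in> {1..2 * k}" for t
  proof -
    have "c (pair_of t) \<le> 2 * k - 1"
      using c that pair_of_in_range[of t k] unfolding distinct_exps_def by auto
    then show ?thesis
      using that unfolding exponent_perm_def pair_exponents_def by auto
  qed
  show "exponent_perm k c t = t" if "t \<notin> {1..2 * k}" for t
    using that unfolding exponent_perm_def by (simp only: if_False)
qed simp

lemma card_hyperoct_nonzero: "card (hyperoct k) \<noteq> 0"
proof -
  have "finite (hyperoct k)"
    unfolding hyperoct_def by (auto intro: finite_permutations)
  moreover have "(id, {}) \<in> hyperoct k"
    unfolding hyperoct_def by (auto intro: permutes_id)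
  ultimately show ?thesis
    by auto
qed

text \<open>For the top exponent \<open>2k - 1\<close> the surviving choices of exponents are exactly the
  images of the hyperoctahedral group, and each contributes the same signed weight.\<close>

lemma sum_pair_exponents_top:
  fixes x :: "nat \<Rightarrow> 'a::{idom, ring_char_0}"
  shows "(\<Sum>c\<in>{1..k} \<rightarrow>\<^sub>E {..2 * k - 1}. (\<Prod>i\<in>{1..k}. binomial_weight (2 * k - 1) (c i))
            * alternant (2 * k) x (pair_exponents (2 * k - 1) c))
    = of_nat (card (hyperoct k)) * ((- 1) ^ k * (\<Prod>j\<in>{0..<k}. of_nat ((2 * k - 1) choose j) * (- 1) ^ j))
        * alternant (2 * k) x (\<lambda>t. t - 1)"
proof -
  define W where "W c = (\<Prod>i\<in>{1..k}. binomial_weight (2 * k - 1) (c i) :: 'a)" for c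
  let ?A = "alternant (2 * k) x (\<lambda>t. t - 1)"
  have "(\<Sum>c\<in>{1..k} \<rightarrow>\<^sub>E {..2 * k - 1}. W c * alternant (2 * k) x (pair_exponents (2 * k - 1) c))
      = (\<Sum>c\<in>distinct_exps k. W c * of_int (sign (exponent_perm k c)) * ?A)"
  proof (rule sum.mono_neutral_cong_right)
    show "finite ({1..k} \<rightarrow>\<^sub>E {..2 * k - 1})"
      by (rule finite_PiE) auto
    show "distinct_exps k \<subseteq> {1..k} \<rightarrow>\<^sub>E {..2 * k - 1}"
      unfolding distinct_exps_def by auto
    show "\<forall>c\<in>({1..k} \<rightarrow>\<^sub>E {..2 * k - 1}) - distinct_exps k.
        W c * alternant (2 * k) x (pair_exponents (2 * k - 1) c) = 0"
      unfolding distinct_exps_def by (auto intro: alternant_eq_0_if_not_inj)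
    show "W c * alternant (2 * k) x (pair_exponents (2 * k - 1) c) = W c * of_int (sign (exponent_perm k c)) * ?A"
      if "c \<in> distinct_exps k" for c
    proof -
      have "alternant (2 * k) x (pair_exponents (2 * k - 1) c) = of_int (sign (exponent_perm k c)) * ?A"
        by (rule alternant_permute_exponents[OF exponent_perm_permutes[OF that]]) (simp add: exponent_perm_def)
      then show ?thesis
        by simp
    qed
  qed
  also have "\<dots> = (\<Sum>(s, E)\<in>hyperoct k. W (hyperoct_exps k s E) * of_int (sign (exponent_perm k (hyperoct_exps k s E))) * ?A)"
    using sum.reindex_bij_betw[OF bij_betw_hyperoct_exps, of "\<lambda>c. W c * of_int (sign (exponent_perm k c)) * ?A"]
    by (simp add: case_prod_beta)
  also have "\<dots> = (\<Sum>(s, E)\<in>hyperoct k. (- 1) ^ k * (\<Prod>j\<in>{0..<k}. of_nat ((2 * k - 1) choose j) * (- 1) ^ j) * ?A)"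
    using weight_sign_hyperoct_exps[where 'a = 'a] unfolding W_def
    by (intro sum.cong) (auto simp: hyperoct_def)
  finally show ?thesis
    unfolding W_def by simp
qed

lemma not_inj_on_pair_exponents_low:
  assumes "c \<in> {1..k} \<rightarrow>\<^sub>E {..N}" "N + 1 < 2 * k"
  shows "\<not> inj_on (pair_exponents N c) {1..2 * k}"
proof
  assume "inj_on (pair_exponents N c) {1..2 * k}"
  moreover have "pair_exponents N c ` {1..2 * k} \<subseteq> {..N}"
    using assms(1) pair_of_in_range unfolding pair_exponents_def by (auto simp: PiE_iff)
  ultimately have "card {1..2 * k} \<le> card {..N}"
    by (intro card_inj_on_le) auto
  with assms(2) show False
    by simp
qed

lemma power_diff_odd_skew: "odd N \<Longrightarrow> (a - b) ^ N = - ((b - a) ^ N :: 'a::comm_ring_1)"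
  by (metis minus_diff_eq power_minus_odd)

lemma prod_minus_one_power: "(\<Prod>j\<in>{0..<k}. (- 1 :: 'a::comm_ring_1) ^ j) = (- 1) ^ (k choose 2)"
proof (induction k)
  case (Suc k)
  have "Suc k choose 2 = (k choose 2) + k"
    by (simp add: numeral_2_eq_2)
  with Suc show ?case
    by (simp add: power_add)
qed (simp add: numeral_2_eq_2)

lemma pfaffian_power_top:
  fixes x :: "nat \<Rightarrow> 'a::{idom, ring_char_0}"
  assumes "k \<ge> 1"
  shows "pfaffian (2 * k) (\<lambda>i j. (x i - x j) ^ (2 * k - 1))
    = (- 1) ^ (k choose 2) * (\<Prod>j\<in>{0..<k}. of_nat ((2 * k - 1) choose j))
      * (\<Prod>i\<in>{1..2 * k}. \<Prod>j\<in>{i<..2 * k}. x i - x j)"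
proof -
  have "2 * k choose 2 = k * (2 * k - 1)"
    by (simp add: choose_two)
  then have sign: "(- 1 :: 'a) ^ k * (- 1) ^ (2 * k choose 2) = 1"
    using assms by (simp add: minus_one_power_iff)
  have "of_nat (card (hyperoct k)) * pfaffian (2 * k) (\<lambda>i j. (x i - x j) ^ (2 * k - 1))
      = perm_pair_sum k (\<lambda>i j. (x i - x j) ^ (2 * k - 1))"
    using assms by (intro perm_pair_sum_eq_pfaffian[symmetric] power_diff_odd_skew) simp
  also have "\<dots> = of_nat (card (hyperoct k))
      * ((- 1) ^ k * (\<Prod>j\<in>{0..<k}. of_nat ((2 * k - 1) choose j) * (- 1) ^ j))
      * ((- 1) ^ (2 * k choose 2) * (\<Prod>i\<in>{1..2 * k}. \<Prod>j\<in>{i<..2 * k}. x i - x j))"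
    unfolding perm_pair_sum_power_diff sum_pair_exponents_top alternant_Vandermonde ..
  finally show ?thesis
    using card_hyperoct_nonzero[of k] sign
    by (simp add: prod.distrib prod_minus_one_power mult_ac)
qed

lemma pfaffian_power_low:
  fixes x :: "nat \<Rightarrow> 'a::{idom, ring_char_0}"
  assumes "m \<ge> 1" "m < k"
  shows "pfaffian (2 * k) (\<lambda>i j. (x i - x j) ^ (2 * m - 1)) = 0"
proof -
  have "of_nat (card (hyperoct k)) * pfaffian (2 * k) (\<lambda>i j. (x i - x j) ^ (2 * m - 1))
      = perm_pair_sum k (\<lambda>i j. (x i - x j) ^ (2 * m - 1))"
    using assms by (intro perm_pair_sum_eq_pfaffian[symmetric] power_diff_odd_skew) simp
  also have "\<dots> = (\<Sum>c\<in>{1..k} \<rightarrow>\<^sub>E {..2 * m - 1}. (\<Prod>i\<in>{1..k}. binomial_weight (2 * m - 1) (c i))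
      * alternant (2 * k) x (pair_exponents (2 * m - 1) c))"
    by (rule perm_pair_sum_power_diff)
  also have "\<dots> = 0"
    using assms not_inj_on_pair_exponents_low[of _ k "2 * m - 1"]
    by (intro sum.neutral) (auto intro: alternant_eq_0_if_not_inj)
  finally show ?thesis
    using card_hyperoct_nonzero[of k] by simp
qed

theorem mainTheorem12:
  fixes n :: nat
  assumes "even n" and "n \<ge> 2"
  shows "(\<forall>x :: nat \<Rightarrow> rat.
            pfaffian n (\<lambda>i j. (x i - x j) ^ (n - 1))
            = (-1) ^ ((n div 2) choose 2)
              * (\<Prod>k\<in>{0..<n div 2}. of_nat ((n - 1) choose k))
              * (\<Prod>i\<in>{1..n}. \<Prod>j\<in>{i<..n}. (x i - x j)))
         \<and> (\<forall>(m::nat) (x :: nat \<Rightarrow> rat). 1 \<le> m \<and> 2 * m < n \<longrightarrow>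
              pfaffian n (\<lambda>i j. (x i - x j) ^ (2 * m - 1)) = 0)"
proof -
  obtain k where n: "n = 2 * k"
    using assms(1) by (rule evenE)
  have "k \<ge> 1"
    using assms(2) n by simp
  then show ?thesis
    unfolding n using pfaffian_power_top pfaffian_power_low by auto
qed

end
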